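(* Let $A$ be a real $2\times2$ matrix and $B=TAT$ where $T=\begin{bmatrix}-1&0\\0&1\end{bmatrix}$. Then $\sigma_{\mathcal{K}}(A)=\sigma_{\mathcal{K}}(B)$, $\sigma_{\mathcal{K}}^{int}(A)=\sigma_{\mathcal{K}}^{int}(B)$ and $\sigma_{\mathcal{K}}^{bd}(A)=\sigma_{\mathcal{K}}^{bd}(B)$. Moreover, $\lambda$ is a type $+$ boundary L-eigenvalue of $A$ if and only if $\lambda$ is a type $-$ boundary L-eigenvalue of $B$.
   Context: Lorentz cone $\mathcal{K}=\{(x_1,x_2)^T:|x_1|\le x_2\}$. For a real $2\times 2$ matrix $A$, a real $\lambda$ is an L-eigenvalue if there is a nonzero $x\in\mathcal{K}$ with $(A-\lambda I)x\in\mathcal{K}$ and $x^T(A-\lambda I)x=0$; $\sigma_{\mathcal{K}}(A)$ is the set of L-eigenvalues; $\sigma^{int}_{\mathcal{K}}(A)$ (resp. $\sigma^{bd}_{\mathcal{K}}(A)$) is the set of those having an associated such $x$ in the interior (resp. on the boundary) of $\mathcal{K}$. For $A=\begin{bmatrix}a&b\\c&d\end{bmatrix}$, $\lambda$ is a type $+$ boundary L-eigenvalue if $\lambda=\frac{a+d+b+c}{2}$ and $a-d\le c-b$, and a type $-$ boundary L-eigenvalue if $\lambda=\frac{a+d-b-c}{2}$ and $a-d\le b-c$. *)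

theory Defs
  imports "HOL-Analysis.Analysis"
begin

definition lorentz_cone :: "(real^2) set" where
  "lorentz_cone = {x. \<bar>x $ 1\<bar> \<le> x $ 2}"

definition L_eig_vec :: "real^2^2 \<Rightarrow> real \<Rightarrow> real^2 \<Rightarrow> bool" where
  "L_eig_vec A l x \<longleftrightarrow> x \<noteq> 0 \<and> x \<in> lorentz_cone \<and>
     (A - l *\<^sub>R mat 1) *v x \<in> lorentz_cone \<and> x \<bullet> ((A - l *\<^sub>R mat 1) *v x) = 0"

definition L_spectrum :: "real^2^2 \<Rightarrow> real set" where
  "L_spectrum A = {l. \<exists>x. L_eig_vec A l x}"

definition L_spectrum_int :: "real^2^2 \<Rightarrow> real set" where
  "L_spectrum_int A = {l. \<exists>x. L_eig_vec A l x \<and> x \<in> interior lorentz_cone}"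

definition L_spectrum_bd :: "real^2^2 \<Rightarrow> real set" where
  "L_spectrum_bd A = {l. \<exists>x. L_eig_vec A l x \<and> x \<in> frontier lorentz_cone}"

text \<open>A = [[a,b],[c,d]] with a = A$1$1, b = A$1$2, c = A$2$1, d = A$2$2.\<close>
definition bd_type_plus :: "real^2^2 \<Rightarrow> real \<Rightarrow> bool" where
  "bd_type_plus A l \<longleftrightarrow> l = (A$1$1 + A$2$2 + A$1$2 + A$2$1) / 2 \<and>
      A$1$1 - A$2$2 \<le> A$2$1 - A$1$2"

definition bd_type_minus :: "real^2^2 \<Rightarrow> real \<Rightarrow> bool" where
  "bd_type_minus A l \<longleftrightarrow> l = (A$1$1 + A$2$2 - A$1$2 - A$2$1) / 2 \<and>
      A$1$1 - A$2$2 \<le> A$1$2 - A$2$1"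

definition T_refl :: "real^2^2" where
  "T_refl = (\<chi> i j. if i = j then (if i = 1 then -1 else 1) else 0)"

end

theory Submission
  imports Defs
begin

(* The reflection T is a symmetric orthogonal matrix that maps the Lorentz cone onto itself.
   For any orthogonal S with S K = K, the map x \<mapsto> S x carries the L-eigenvectors of A
   bijectively onto those of S A S^T with the same eigenvalue, because
   (S A S^T - \<lambda> I) S x = S (A - \<lambda> I) x and S preserves inner products; being a linear
   homeomorphism fixing K, it also preserves the interior and the frontier of K.
   The boundary types are exchanged because T swaps the two boundary rays of K, which for
   B = T A T amounts to replacing b, c by -b, -c. *)

lemma frontier_injective_linear_image:
  fixes f :: "'a::euclidean_space \<Rightarrow> 'a"
  assumes "linear f" "inj f"
  shows "frontier (f ` S) = f ` frontier S"
  using assms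
  by (simp add: frontier_def closure_injective_linear_image interior_injective_linear_image
      image_set_diff)

lemma orthogonal_matrix_inner:
  fixes S :: "real^'n^'n"
  assumes "orthogonal_matrix S"
  shows "(S *v x) \<bullet> (S *v y) = x \<bullet> y"
  using assms orthogonal_transformation_matrix[of "(*v) S"]
  by (simp add: orthogonal_transformation_def)

lemma orthogonal_matrix_inj:
  fixes S :: "real^'n^'n"
  assumes "orthogonal_matrix S"
  shows "inj ((*v) S)"
  using assms orthogonal_transformation_inj orthogonal_transformation_matrix by fastforce

lemma orthogonal_matrix_surj:
  fixes S :: "real^'n^'n"
  assumes "orthogonal_matrix S"
  shows "surj ((*v) S)"
  using assms orthogonal_matrix_inj linear_injective_imp_surjective
  by (blast intro: matrix_vector_mul_linear)

lemma shifted_matrix_vector_mult: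
  fixes M :: "real^'n^'n"
  shows "(M - l *\<^sub>R mat 1) *v y = M *v y - l *\<^sub>R y"
  by (metis matrix_vector_mult_diff_rdistrib matrix_vector_mul_lid scaleR_matrix_vector_assoc)

lemma orthogonal_conj_shifted_mult:
  fixes S A :: "real^'n^'n"
  assumes "orthogonal_matrix S"
  shows "(S ** A ** transpose S - l *\<^sub>R mat 1) *v (S *v x) = S *v ((A - l *\<^sub>R mat 1) *v x)"
proof -
  have "(S ** A ** transpose S) *v (S *v x) = S *v (A *v x)"
    using assms unfolding orthogonal_matrix
    by (metis matrix_mul_assoc matrix_mul_rid matrix_vector_mul_assoc)
  then show ?thesis
    by (simp add: shifted_matrix_vector_mult matrix_vector_mult_diff_distrib
        matrix_vector_mult_scaleR)
qed

lemma L_eig_vec_orthogonal_conj_iff: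
  assumes S: "orthogonal_matrix S" and cone: "(*v) S ` lorentz_cone = lorentz_cone"
  shows "L_eig_vec (S ** A ** transpose S) l (S *v x) \<longleftrightarrow> L_eig_vec A l x"
proof -
  have inj: "inj ((*v) S)"
    using S by (rule orthogonal_matrix_inj)
  have in_cone: "S *v y \<in> lorentz_cone \<longleftrightarrow> y \<in> lorentz_cone" for y
    by (metis cone inj inj_image_mem_iff)
  have nonzero: "S *v y = 0 \<longleftrightarrow> y = 0" for y
    by (metis inj injD matrix_vector_mult_0_right)
  show ?thesis
    unfolding L_eig_vec_def orthogonal_conj_shifted_mult[OF S]
    by (simp add: in_cone nonzero orthogonal_matrix_inner[OF S])
qed

lemma orthogonal_cone_symmetry_interior_frontier:
  assumes S: "orthogonal_matrix S" and cone: "(*v) S ` lorentz_cone = lorentz_cone"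
  shows "S *v x \<in> interior lorentz_cone \<longleftrightarrow> x \<in> interior lorentz_cone"
    and "S *v x \<in> frontier lorentz_cone \<longleftrightarrow> x \<in> frontier lorentz_cone"
proof -
  have lin: "linear ((*v) S)" and inj: "inj ((*v) S)"
    using S by (simp_all add: matrix_vector_mul_linear orthogonal_matrix_inj)
  show "S *v x \<in> interior lorentz_cone \<longleftrightarrow> x \<in> interior lorentz_cone"
    using interior_injective_linear_image[OF lin inj, of lorentz_cone]
    by (metis cone inj inj_image_mem_iff)
  show "S *v x \<in> frontier lorentz_cone \<longleftrightarrow> x \<in> frontier lorentz_cone"
    using frontier_injective_linear_image[OF lin inj, of lorentz_cone]
    by (metis cone inj inj_image_mem_iff)
qed

lemma L_spectra_orthogonal_conj:
  fixes A S :: "real^2^2"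
  assumes S: "orthogonal_matrix S" and cone: "(*v) S ` lorentz_cone = lorentz_cone"
  defines "B \<equiv> S ** A ** transpose S"
  shows "L_spectrum B = L_spectrum A" and "L_spectrum_int B = L_spectrum_int A"
    and "L_spectrum_bd B = L_spectrum_bd A"
proof -
  have transfer: "(\<exists>y. L_eig_vec B l y \<and> P y) \<longleftrightarrow> (\<exists>x. L_eig_vec A l x \<and> P (S *v x))"
    for l P
    using orthogonal_matrix_surj[OF S] L_eig_vec_orthogonal_conj_iff[OF S cone]
    unfolding B_def by (metis surjD)
  show "L_spectrum B = L_spectrum A"
    using transfer[where P = "\<lambda>_. True"] by (simp add: L_spectrum_def)
  show "L_spectrum_int B = L_spectrum_int A"
    using transfer[where P = "\<lambda>y. y \<in> interior lorentz_cone"]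
    by (simp add: L_spectrum_int_def orthogonal_cone_symmetry_interior_frontier[OF S cone])
  show "L_spectrum_bd B = L_spectrum_bd A"
    using transfer[where P = "\<lambda>y. y \<in> frontier lorentz_cone"]
    by (simp add: L_spectrum_bd_def orthogonal_cone_symmetry_interior_frontier[OF S cone])
qed

lemma transpose_T_refl: "transpose T_refl = T_refl"
  by (simp add: T_refl_def transpose_def vec_eq_iff)

lemma T_refl_mult_self: "T_refl ** T_refl = mat 1"
  by (simp add: T_refl_def matrix_matrix_mult_def mat_def vec_eq_iff sum_2 forall_2)

lemma orthogonal_matrix_T_refl: "orthogonal_matrix T_refl"
  by (simp add: orthogonal_matrix transpose_T_refl T_refl_mult_self)

lemma T_refl_mult_vector: "T_refl *v x = (\<chi> i. if i = 1 then - x $ 1 else x $ i)"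
  by (simp add: T_refl_def matrix_vector_mult_def vec_eq_iff sum_2 forall_2)

lemma T_refl_image_lorentz_cone: "(*v) T_refl ` lorentz_cone = lorentz_cone"
proof -
  have in_cone: "T_refl *v x \<in> lorentz_cone \<longleftrightarrow> x \<in> lorentz_cone" for x
    by (simp add: T_refl_mult_vector lorentz_cone_def)
  have involution: "T_refl *v (T_refl *v x) = x" for x
    by (simp add: matrix_vector_mul_assoc T_refl_mult_self)
  show ?thesis
    using in_cone involution by (metis image_eqI subsetI subset_antisym image_subsetI)
qed

lemma bd_type_plus_iff_minus_T_refl_conj:
  "bd_type_plus A l \<longleftrightarrow> bd_type_minus (T_refl ** A ** T_refl) l"
  by (simp add: bd_type_plus_def bd_type_minus_def T_refl_def matrix_matrix_mult_def sum_2)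

theorem corollary3p6:
  fixes A :: "real^2^2"
  defines "B \<equiv> T_refl ** A ** T_refl"
  shows "L_spectrum A = L_spectrum B \<and> L_spectrum_int A = L_spectrum_int B \<and>
         L_spectrum_bd A = L_spectrum_bd B \<and>
         (\<forall>l. bd_type_plus A l \<longleftrightarrow> bd_type_minus B l)"
proof -
  have B: "B = T_refl ** A ** transpose T_refl"
    by (simp add: B_def transpose_T_refl)
  note spectra = L_spectra_orthogonal_conj[OF orthogonal_matrix_T_refl T_refl_image_lorentz_cone]
  show ?thesis
    unfolding B using spectra
    by (simp add: bd_type_plus_iff_minus_T_refl_conj transpose_T_refl)
qed

end
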